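(* When $m=2$, the bound $R_{ach}(\mathbf{D})$ of the simultaneous-decoding achievability theorem satisfies $$R_{ach}(\mathbf{D})\le R^T(\mathbf{D})=\min\Big[\max_{i\in\{1,2\}}I(X;U_{\{1,2\}}|Y_i)+I(X;U_{\{1\}}|U_{\{1,2\}},Y_1)+I(X;U_{\{2\}}|U_{\{1,2\}},Y_2)\Big],$$ where the minimum is over joint distributions of $(U_{\{1,2\}},U_{\{1\}},U_{\{2\}},X,Y_1,Y_2)$ with finite-alphabet auxiliaries such that the marginal of $(X,Y_1,Y_2)$ is the given one, $(U_{\{1,2\}},U_{\{1\}},U_{\{2\}})\leftrightarrow X\leftrightarrow(Y_1,Y_2)$, and there exist functions $g_l$ with $E[d_l(X,g_l(U_{\{1,2\}},U_{\{l\}},Y_l))]\le D_l$ for $l=1,2$.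
   Context: Finite-alphabet setting: source $X$, side informations $Y_1,Y_2$ at two decoders, distortion measures $d_l$, constraints $D_l$. $R_{ach}(\mathbf{D})$ is the lower convex envelope in $\mathbf{D}$ of $R'_{ach}(\mathbf{D})=\min_v\inf_p\inf\sum_j R_{\mathcal{S}_j}$ where: $v=(\mathcal{S}_1,\mathcal{S}_2,\mathcal{S}_3)$ ranges over orderings of the nonempty subsets of $\{1,2\}$; $p$ ranges over joint distributions of finite-alphabet $(U_{\mathcal{S}_1},U_{\mathcal{S}_2},U_{\mathcal{S}_3})$ with $(X,Y_1,Y_2)$ having the given $(X,Y_1,Y_2)$-marginal, with $\mathcal{U}\leftrightarrow X\leftrightarrow(Y_1,Y_2)$ and functions $g_l(U_{\mathcal{D}_l},Y_l)$ meeting $E d_l\le D_l$; and the inner infimum is over nonnegative $R_{\mathcal{S}_j},R'_{\mathcal{S}_j}$ with $R_{\mathcal{S}_j}+R'_{\mathcal{S}_j}\ge I(X,U^-_{\mathcal{S}_j};U_{\mathcal{S}_j})$ and, for each $l$ and nonempty $\mathcal{D}'_l\subseteq\mathcal{D}_l$, $\sum_{\mathcal{S}_j\in\mathcal{D}'_l}R'_{\mathcal{S}_j}\le\sum_{\mathcal{S}_j\in\mathcal{D}'_l}H(U_{\mathcal{S}_j})-H(U_{\mathcal{D}'_l}|U_{\mathcal{D}_l\setminus\mathcal{D}'_l},Y_l)$. Here $\mathcal{D}_l=\{\mathcal{S}:l\in\mathcal{S}\}$, $U_{\mathcal{D}'}=\{U_\mathcal{S}:\mathcal{S}\in\mathcal{D}'\}$,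 $U^-_{\mathcal{S}_j}=\{U_{\mathcal{S}_i}:i<j\}$. *)

theory Defs
  imports Complex_Main "HOL-Library.Extended_Real"
begin

definition supp :: "('w \<Rightarrow> real) \<Rightarrow> 'w set" where
  "supp p = {w. p w \<noteq> 0}"

definition is_dist :: "('w \<Rightarrow> real) \<Rightarrow> bool" where
  "is_dist p \<longleftrightarrow> finite (supp p) \<and> (\<forall>w. 0 \<le> p w) \<and> (\<Sum>w\<in>supp p. p w) = 1"

definition prob :: "('w \<Rightarrow> real) \<Rightarrow> ('w \<Rightarrow> 'v) \<Rightarrow> 'v \<Rightarrow> real" where
  "prob p f v = (\<Sum>w\<in>{w\<in>supp p. f w = v}. p w)"

definition expect :: "('w \<Rightarrow> real) \<Rightarrow> ('w \<Rightarrow> real) \<Rightarrow> real" where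
  "expect p f = (\<Sum>w\<in>supp p. p w * f w)"

definition entropy :: "('w \<Rightarrow> real) \<Rightarrow> ('w \<Rightarrow> 'v) \<Rightarrow> real" where
  "entropy p f = - (\<Sum>v\<in>f ` supp p. prob p f v * log 2 (prob p f v))"

definition cond_entropy :: "('w \<Rightarrow> real) \<Rightarrow> ('w \<Rightarrow> 'v) \<Rightarrow> ('w \<Rightarrow> 'u) \<Rightarrow> real" where
  "cond_entropy p f g = entropy p (\<lambda>w. (f w, g w)) - entropy p g"

definition mutual_info :: "('w \<Rightarrow> real) \<Rightarrow> ('w \<Rightarrow> 'v) \<Rightarrow> ('w \<Rightarrow> 'u) \<Rightarrow> real" where
  "mutual_info p f g = entropy p f - cond_entropy p f g"

definition cond_mutual_info ::
  "('w \<Rightarrow> real) \<Rightarrow> ('w \<Rightarrow> 'v) \<Rightarrow> ('w \<Rightarrow> 'u) \<Rightarrow> ('w \<Rightarrow> 't) \<Rightarrow> real" where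
  "cond_mutual_info p f g h = cond_entropy p f h - cond_entropy p f (\<lambda>w. (g w, h w))"

definition markov :: "('w \<Rightarrow> real) \<Rightarrow> ('w \<Rightarrow> 'a) \<Rightarrow> ('w \<Rightarrow> 'b) \<Rightarrow> ('w \<Rightarrow> 'c) \<Rightarrow> bool" where
  "markov p f g h \<longleftrightarrow> (\<forall>a b c.
     prob p (\<lambda>w. (f w, g w, h w)) (a, b, c) * prob p g b
       = prob p (\<lambda>w. (f w, g w)) (a, b) * prob p (\<lambda>w. (g w, h w)) (b, c))"

section \<open>Outcome space: ((U_0,U_1,U_2), X, Y_1, Y_2); auxiliaries are nat-valued
  with finite support (= arbitrary finite alphabets)\<close>

definition uc :: "nat \<Rightarrow> ((nat \<times> nat \<times> nat) \<times> 'x \<times> 'y1 \<times> 'y2) \<Rightarrow> nat" where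
  "uc j w = (case fst w of (a, b, c) \<Rightarrow> if j = 0 then a else if j = 1 then b else c)"

definition xc :: "((nat \<times> nat \<times> nat) \<times> 'x \<times> 'y1 \<times> 'y2) \<Rightarrow> 'x" where
  "xc w = fst (snd w)"

definition y1c :: "((nat \<times> nat \<times> nat) \<times> 'x \<times> 'y1 \<times> 'y2) \<Rightarrow> 'y1" where
  "y1c w = fst (snd (snd w))"

definition y2c :: "((nat \<times> nat \<times> nat) \<times> 'x \<times> 'y1 \<times> 'y2) \<Rightarrow> 'y2" where
  "y2c w = snd (snd (snd w))"

definition usub :: "nat set \<Rightarrow> ((nat \<times> nat \<times> nat) \<times> 'x \<times> 'y1 \<times> 'y2) \<Rightarrow> (nat \<Rightarrow> nat)" where
  "usub J w = (\<lambda>j. if j \<in> J then uc j w else 0)"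

text \<open>Positions j (0-based) of the subsets S_{j+1} of the ordering v containing l.\<close>
definition dec :: "nat set list \<Rightarrow> nat \<Rightarrow> nat set" where
  "dec v l = {j. j < 3 \<and> l \<in> v ! j}"

definition ach_feasible ::
  "('x \<times> 'y1 \<times> 'y2 \<Rightarrow> real) \<Rightarrow> ('x \<Rightarrow> 'z1 \<Rightarrow> real) \<Rightarrow> ('x \<Rightarrow> 'z2 \<Rightarrow> real) \<Rightarrow> real \<Rightarrow> real
    \<Rightarrow> nat set list \<Rightarrow> ((nat \<times> nat \<times> nat) \<times> 'x \<times> 'y1 \<times> 'y2 \<Rightarrow> real)
    \<Rightarrow> (nat \<Rightarrow> real) \<Rightarrow> (nat \<Rightarrow> real) \<Rightarrow> bool" where
  "ach_feasible PXY d1 d2 D1 D2 v p R R' \<longleftrightarrow>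
     set v = {{1}, {2}, {1, 2}} \<and> distinct v \<and>
     is_dist p \<and> prob p snd = PXY \<and>
     markov p fst xc (\<lambda>w. (y1c w, y2c w)) \<and>
     (\<exists>(g1 :: (nat \<Rightarrow> nat) \<Rightarrow> 'y1 \<Rightarrow> 'z1) (g2 :: (nat \<Rightarrow> nat) \<Rightarrow> 'y2 \<Rightarrow> 'z2).
        expect p (\<lambda>w. d1 (xc w) (g1 (usub (dec v 1) w) (y1c w))) \<le> D1 \<and>
        expect p (\<lambda>w. d2 (xc w) (g2 (usub (dec v 2) w) (y2c w))) \<le> D2) \<and>
     (\<forall>j<3. 0 \<le> R j \<and> 0 \<le> R' j \<and>
        mutual_info p (\<lambda>w. (xc w, usub {..<j} w)) (uc j) \<le> R j + R' j) \<and>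
     (\<forall>J. J \<noteq> {} \<and> J \<subseteq> dec v 1 \<longrightarrow>
        (\<Sum>j\<in>J. R' j) \<le> (\<Sum>j\<in>J. entropy p (uc j))
           - cond_entropy p (usub J) (\<lambda>w. (usub (dec v 1 - J) w, y1c w))) \<and>
     (\<forall>J. J \<noteq> {} \<and> J \<subseteq> dec v 2 \<longrightarrow>
        (\<Sum>j\<in>J. R' j) \<le> (\<Sum>j\<in>J. entropy p (uc j))
           - cond_entropy p (usub J) (\<lambda>w. (usub (dec v 2 - J) w, y2c w)))"

definition Rach' ::
  "('x \<times> 'y1 \<times> 'y2 \<Rightarrow> real) \<Rightarrow> ('x \<Rightarrow> 'z1 \<Rightarrow> real) \<Rightarrow> ('x \<Rightarrow> 'z2 \<Rightarrow> real)
    \<Rightarrow> real \<times> real \<Rightarrow> ereal" where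
  "Rach' PXY d1 d2 D = Inf {ereal (R 0 + R 1 + R 2) | v p R R'.
      ach_feasible PXY d1 d2 (fst D) (snd D) v p R R'}"

definition lower_convex_env :: "(real \<times> real \<Rightarrow> ereal) \<Rightarrow> real \<times> real \<Rightarrow> ereal" where
  "lower_convex_env F D = Inf {(\<Sum>k<(n::nat). ereal (c k) * F (Ds k)) | n c Ds.
      (\<forall>k<n. 0 \<le> c k) \<and> (\<Sum>k<n. c k) = 1 \<and>
      (\<Sum>k<n. c k * fst (Ds k)) = fst D \<and> (\<Sum>k<n. c k * snd (Ds k)) = snd D}"

definition Rach ::
  "('x \<times> 'y1 \<times> 'y2 \<Rightarrow> real) \<Rightarrow> ('x \<Rightarrow> 'z1 \<Rightarrow> real) \<Rightarrow> ('x \<Rightarrow> 'z2 \<Rightarrow> real)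
    \<Rightarrow> real \<times> real \<Rightarrow> ereal" where
  "Rach PXY d1 d2 = lower_convex_env (Rach' PXY d1 d2)"

section \<open>R^T: here (U_0,U_1,U_2) = (U_{1,2}, U_{1}, U_{2})\<close>

definition RT ::
  "('x \<times> 'y1 \<times> 'y2 \<Rightarrow> real) \<Rightarrow> ('x \<Rightarrow> 'z1 \<Rightarrow> real) \<Rightarrow> ('x \<Rightarrow> 'z2 \<Rightarrow> real)
    \<Rightarrow> real \<times> real \<Rightarrow> ereal" where
  "RT PXY d1 d2 D = Inf {ereal (
        max (cond_mutual_info p xc (uc 0) y1c) (cond_mutual_info p xc (uc 0) y2c)
        + cond_mutual_info p xc (uc 1) (\<lambda>w. (uc 0 w, y1c w))
        + cond_mutual_info p xc (uc 2) (\<lambda>w. (uc 0 w, y2c w))) | p.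
      is_dist p \<and> prob p snd = PXY \<and>
      markov p fst xc (\<lambda>w. (y1c w, y2c w)) \<and>
      (\<exists>(g1 :: nat \<Rightarrow> nat \<Rightarrow> 'y1 \<Rightarrow> 'z1) (g2 :: nat \<Rightarrow> nat \<Rightarrow> 'y2 \<Rightarrow> 'z2).
        expect p (\<lambda>w. d1 (xc w) (g1 (uc 0 w) (uc 1 w) (y1c w))) \<le> fst D \<and>
        expect p (\<lambda>w. d2 (xc w) (g2 (uc 0 w) (uc 2 w) (y2c w))) \<le> snd D)}"

end

theory Submission
  imports Defs
begin

text \<open>Take a test channel of \<open>R\<^sup>T\<close> and send the common description \<open>U\<^sub>1\<^sub>2\<close> first, then
  \<open>U\<^sub>1\<close> and \<open>U\<^sub>2\<close>, with binning rates \<open>min\<^sub>l I(U\<^sub>1\<^sub>2; Y\<^sub>l)\<close> and \<open>I(U\<^sub>l; U\<^sub>1\<^sub>2, Y\<^sub>l)\<close>.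
  The decoding constraints of each decoder then follow from the chain rule, and the Markov
  chain \<open>U -- X -- Y\<^sub>l\<close> turns the remaining rates into the Wyner-Ziv terms
  \<open>I(X; U\<^sub>1\<^sub>2 | Y\<^sub>l)\<close> and \<open>I(X; U\<^sub>l | U\<^sub>1\<^sub>2, Y\<^sub>l)\<close> -- except that the last description still
  pays \<open>I(U\<^sub>1; U\<^sub>2 | U\<^sub>1\<^sub>2, X)\<close>. Replacing the test channel by the coupling in which \<open>U\<^sub>1\<close> and
  \<open>U\<^sub>2\<close> are conditionally independent given \<open>(U\<^sub>1\<^sub>2, X)\<close> removes this term and changes
  neither the laws of \<open>(U\<^sub>1\<^sub>2, U\<^sub>l, X, Y\<^sub>l)\<close>, on which the objective of \<open>R\<^sup>T\<close> and the
  distortions depend, nor the law of \<open>(X, Y\<^sub>1, Y\<^sub>2)\<close>.\<close>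

lemma is_dist_nonneg: "is_dist p \<Longrightarrow> 0 \<le> p w"
  unfolding is_dist_def by simp

lemma is_dist_finite_supp: "is_dist p \<Longrightarrow> finite (supp p)"
  unfolding is_dist_def by simp

lemma is_dist_pos: "is_dist p \<Longrightarrow> w \<in> supp p \<Longrightarrow> 0 < p w"
  unfolding is_dist_def supp_def by (simp add: order_less_le)

lemma prob_nonneg: "is_dist p \<Longrightarrow> 0 \<le> prob p f v"
  unfolding prob_def by (simp add: sum_nonneg is_dist_nonneg)

lemma prob_cong:
  assumes "\<And>w. w \<in> supp p \<Longrightarrow> f w = v \<longleftrightarrow> g w = u"
  shows "prob p f v = prob p g u"
  unfolding prob_def using assms by (intro sum.cong) auto

lemma prob_eq_0_outside: "v \<notin> f ` supp p \<Longrightarrow> prob p f v = 0"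
  unfolding prob_def by (rule sum.neutral) auto

lemma prob_eq_0_iff:
  assumes "is_dist p"
  shows "prob p f v = 0 \<longleftrightarrow> v \<notin> f ` supp p"
proof
  assume "v \<notin> f ` supp p"
  then show "prob p f v = 0" by (rule prob_eq_0_outside)
next
  assume "prob p f v = 0"
  show "v \<notin> f ` supp p"
  proof
    assume "v \<in> f ` supp p"
    then obtain w where w: "w \<in> supp p" "f w = v" by blast
    have "0 < p w" using is_dist_pos[OF assms w(1)] .
    also have "p w \<le> prob p f v" unfolding prob_def
      by (rule member_le_sum) (use w assms in \<open>auto simp: is_dist_nonneg is_dist_finite_supp\<close>)
    finally show False using \<open>prob p f v = 0\<close> by simp
  qed
qed

lemma prob_pos: "is_dist p \<Longrightarrow> w \<in> supp p \<Longrightarrow> 0 < prob p f (f w)"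
  by (metis image_eqI order_less_le prob_eq_0_iff prob_nonneg)

lemma sum_supp_eq_sum_prob:
  assumes "finite (supp p)"
  shows "(\<Sum>w\<in>supp p. p w * \<phi> (f w)) = (\<Sum>v\<in>f ` supp p. prob p f v * \<phi> v)"
proof -
  have "(\<Sum>w\<in>supp p. p w * \<phi> (f w)) =
      (\<Sum>v\<in>f ` supp p. \<Sum>w\<in>{w\<in>supp p. f w = v}. p w * \<phi> (f w))"
    by (rule sum.group[symmetric]) (use assms in auto)
  also have "\<dots> = (\<Sum>v\<in>f ` supp p. prob p f v * \<phi> v)"
    unfolding prob_def sum_distrib_right by (intro sum.cong) auto
  finally show ?thesis .
qed

lemma sum_prob_eq_1: "is_dist p \<Longrightarrow> (\<Sum>v\<in>f ` supp p. prob p f v) = 1"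
  using sum_supp_eq_sum_prob[of p "\<lambda>_. 1" f] unfolding is_dist_def by simp

lemma sum_prob_pair_snd:
  assumes "finite (supp p)" "finite C" "g ` supp p \<subseteq> C"
  shows "(\<Sum>c\<in>C. prob p (\<lambda>w. (f w, g w)) (a, c)) = prob p f a"
proof -
  have "(\<Sum>c\<in>C. prob p (\<lambda>w. (f w, g w)) (a, c)) =
      (\<Sum>c\<in>C. sum p {w \<in> {w\<in>supp p. f w = a}. g w = c})"
    unfolding prob_def by (intro sum.cong refl arg_cong[where f = "sum p"]) auto
  also have "\<dots> = prob p f a"
    unfolding prob_def by (rule sum.group) (use assms in auto)
  finally show ?thesis .
qed

lemma sum_prob_pair_fst:
  assumes "finite (supp p)" "finite C" "g ` supp p \<subseteq> C"
  shows "(\<Sum>c\<in>C. prob p (\<lambda>w. (g w, f w)) (c, a)) = prob p f a"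
proof -
  have "\<And>c. prob p (\<lambda>w. (g w, f w)) (c, a) = prob p (\<lambda>w. (f w, g w)) (a, c)"
    by (rule prob_cong) auto
  then show ?thesis using sum_prob_pair_snd[OF assms] by simp
qed

lemma prob_comp:
  assumes "finite (supp p)"
  shows "prob p (\<lambda>w. \<phi> (f w)) v = (\<Sum>a\<in>{a\<in>f ` supp p. \<phi> a = v}. prob p f a)"
proof -
  have "prob p (\<lambda>w. \<phi> (f w)) v = (\<Sum>w\<in>supp p. p w * (if \<phi> (f w) = v then 1 else 0))"
    unfolding prob_def sum.inter_filter[OF assms] by (rule sum.cong) auto
  also have "\<dots> = (\<Sum>a\<in>f ` supp p. prob p f a * (if \<phi> a = v then 1 else 0))"
    by (rule sum_supp_eq_sum_prob[OF assms])
  also have "\<dots> = (\<Sum>a\<in>{a\<in>f ` supp p. \<phi> a = v}. prob p f a)"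
    by (simp add: sum.inter_filter assms if_distrib cong: if_cong)
  finally show ?thesis .
qed

lemma image_supp_eq_prob_nonzero: "is_dist p \<Longrightarrow> f ` supp p = {v. prob p f v \<noteq> 0}"
  using prob_eq_0_iff[of p f] by auto

lemma prob_comp_eq:
  assumes "is_dist p" "is_dist q" "prob p f = prob q g"
  shows "prob p (\<lambda>w. \<phi> (f w)) = prob q (\<lambda>w. \<phi> (g w))"
  using assms by (simp add: fun_eq_iff prob_comp is_dist_finite_supp image_supp_eq_prob_nonzero)

lemma entropy_eq_sum_supp:
  "finite (supp p) \<Longrightarrow> entropy p f = - (\<Sum>w\<in>supp p. p w * log 2 (prob p f (f w)))"
  unfolding entropy_def using sum_supp_eq_sum_prob[of p "\<lambda>v. log 2 (prob p f v)" f] by simp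

lemma entropy_eq_if_prob_eq:
  "is_dist p \<Longrightarrow> is_dist q \<Longrightarrow> prob p f = prob q g \<Longrightarrow> entropy p f = entropy q g"
  unfolding entropy_def by (simp add: image_supp_eq_prob_nonzero)

lemma expect_eq_if_prob_eq:
  assumes "is_dist p" "is_dist q" "prob p f = prob q g"
  shows "expect p (\<lambda>w. \<phi> (f w)) = expect q (\<lambda>w. \<phi> (g w))"
  using assms unfolding expect_def
  by (simp add: sum_supp_eq_sum_prob is_dist_finite_supp image_supp_eq_prob_nonzero)

lemma prob_inj: "inj f \<Longrightarrow> prob r f (f w) = r w"
proof -
  assume "inj f"
  then have eq: "{w'\<in>supp r. f w' = f w} = supp r \<inter> {w}" by (auto dest: injD)
  show ?thesis unfolding prob_def eq by (cases "w \<in> supp r") (auto simp: supp_def)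
qed

lemma prob_triple_nonzero_mid:
  "is_dist p \<Longrightarrow> prob p (\<lambda>w. (f w, g w, h w)) (a, b, c) \<noteq> 0 \<Longrightarrow> prob p g b \<noteq> 0"
  by (auto simp: prob_eq_0_iff)

lemma entropy_cong:
  assumes "is_dist p"
    and "\<And>w w'. w \<in> supp p \<Longrightarrow> w' \<in> supp p \<Longrightarrow> f w = f w' \<longleftrightarrow> g w = g w'"
  shows "entropy p f = entropy p g"
proof -
  have "\<And>w. w \<in> supp p \<Longrightarrow> prob p f (f w) = prob p g (g w)"
    by (rule prob_cong) (use assms(2) in auto)
  then show ?thesis
    by (simp add: entropy_eq_sum_supp is_dist_finite_supp[OF assms(1)] cong: sum.cong)
qed

lemma entropy_const:
  assumes "is_dist p"
  shows "entropy p (\<lambda>_. c) = 0"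
proof -
  have "(\<lambda>_. c) ` supp p = {} \<or> (\<lambda>_. c) ` supp p = {c}" by auto
  moreover have "prob p (\<lambda>_. c) c = 1" using assms unfolding prob_def is_dist_def by simp
  ultimately show ?thesis unfolding entropy_def by auto
qed

lemma gibbs_inequality:
  assumes "finite S" "\<And>w. w \<in> S \<Longrightarrow> 0 \<le> p w" "sum p S = 1"
    and "\<And>w. w \<in> S \<Longrightarrow> 0 < r w" "(\<Sum>w\<in>S. p w * r w) \<le> 1"
  shows "0 \<le> (\<Sum>w\<in>S. p w * - log 2 (r w))"
proof -
  have "\<And>w. w \<in> S \<Longrightarrow> p w * (1 - r w) / ln 2 \<le> p w * - log 2 (r w)"
  proof -
    fix w assume "w \<in> S"
    then have "ln (r w) \<le> r w - 1" using assms(4) by (simp add: ln_le_minus_one)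
    then have "(1 - r w) / ln 2 \<le> - ln (r w) / ln 2"
      by (intro divide_right_mono) auto
    then have "(1 - r w) / ln 2 \<le> - log 2 (r w)"
      by (simp add: log_def)
    then show "p w * (1 - r w) / ln 2 \<le> p w * - log 2 (r w)"
      using assms(2)[OF \<open>w \<in> S\<close>] by (metis mult_left_mono times_divide_eq_right)
  qed
  then have "(\<Sum>w\<in>S. p w * (1 - r w) / ln 2) \<le> (\<Sum>w\<in>S. p w * - log 2 (r w))"
    by (rule sum_mono)
  moreover have "(\<Sum>w\<in>S. p w * (1 - r w) / ln 2) = (1 - (\<Sum>w\<in>S. p w * r w)) / ln 2"
    using assms(3) by (simp add: sum_divide_distrib[symmetric] right_diff_distrib sum_subtractf)
  ultimately show ?thesis using assms(5) by (smt (verit) divide_nonneg_pos ln_gt_zero)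
qed

lemma sum_cond_product_eq_1:
  assumes dp: "is_dist p"
  shows "(\<Sum>(x, y, z)\<in>f ` supp p \<times> g ` supp p \<times> h ` supp p.
      prob p (\<lambda>w. (f w, h w)) (x, z) * prob p (\<lambda>w. (g w, h w)) (y, z) / prob p h z) = 1"
    (is "(\<Sum>(x, y, z)\<in>?F \<times> ?G \<times> ?H. ?Pfh (x, z) * ?Pgh (y, z) / ?Ph z) = 1")
proof -
  have "(\<Sum>(x, y, z)\<in>?F \<times> ?G \<times> ?H. ?Pfh (x, z) * ?Pgh (y, z) / ?Ph z) =
      (\<Sum>z\<in>?H. (\<Sum>x\<in>?F. ?Pfh (x, z)) * (\<Sum>y\<in>?G. ?Pgh (y, z)) / ?Ph z)"
    unfolding sum.cartesian_product[symmetric]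
    by (simp add: sum.swap[of _ ?H] sum.swap[of _ ?H ?G] sum_product sum_divide_distrib)
  also have "\<dots> = (\<Sum>z\<in>?H. ?Ph z)"
  proof (intro sum.cong refl)
    fix z assume "z \<in> ?H"
    then have "?Ph z \<noteq> 0" by (simp add: prob_eq_0_iff[OF dp])
    moreover have "(\<Sum>x\<in>?F. ?Pfh (x, z)) = ?Ph z" "(\<Sum>y\<in>?G. ?Pgh (y, z)) = ?Ph z"
      using is_dist_finite_supp[OF dp] by (auto intro: sum_prob_pair_fst)
    ultimately show "(\<Sum>x\<in>?F. ?Pfh (x, z)) * (\<Sum>y\<in>?G. ?Pgh (y, z)) / ?Ph z = ?Ph z" by simp
  qed
  also have "\<dots> = 1" by (rule sum_prob_eq_1[OF dp])
  finally show ?thesis .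
qed

lemma expected_cond_product_ratio_le_1:
  fixes f :: "'w \<Rightarrow> 'a" and g :: "'w \<Rightarrow> 'b" and h :: "'w \<Rightarrow> 'c"
  assumes dp: "is_dist p"
  defines "r \<equiv> \<lambda>w. prob p (\<lambda>w. (f w, h w)) (f w, h w) * prob p (\<lambda>w. (g w, h w)) (g w, h w)
      / (prob p (\<lambda>w. (f w, g w, h w)) (f w, g w, h w) * prob p h (h w))"
  shows "(\<Sum>w\<in>supp p. p w * r w) \<le> 1"
proof -
  define F where "F = (\<lambda>w. (f w, g w, h w))"
  define \<psi> where "\<psi> = (\<lambda>(x, y, z).
      prob p (\<lambda>w. (f w, h w)) (x, z) * prob p (\<lambda>w. (g w, h w)) (y, z) / prob p h z)"
  have "(\<Sum>w\<in>supp p. p w * r w) = (\<Sum>v\<in>F ` supp p. prob p F v * (\<psi> v / prob p F v))"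
    using sum_supp_eq_sum_prob[OF is_dist_finite_supp[OF dp], of "\<lambda>v. \<psi> v / prob p F v" F]
    unfolding r_def \<psi>_def F_def by (simp add: field_simps)
  also have "\<dots> = (\<Sum>v\<in>F ` supp p. \<psi> v)"
  proof (intro sum.cong refl)
    fix v assume "v \<in> F ` supp p"
    then have "prob p F v \<noteq> 0" by (simp add: prob_eq_0_iff[OF dp])
    then show "prob p F v * (\<psi> v / prob p F v) = \<psi> v" by simp
  qed
  also have "\<dots> \<le> (\<Sum>v\<in>f ` supp p \<times> g ` supp p \<times> h ` supp p. \<psi> v)"
    by (rule sum_mono2) (use is_dist_finite_supp[OF dp] in \<open>auto simp: F_def \<psi>_def
        intro!: divide_nonneg_nonneg mult_nonneg_nonneg prob_nonneg[OF dp]\<close>)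
  also have "\<dots> = 1"
    unfolding \<psi>_def by (rule sum_cond_product_eq_1[OF dp])
  finally show ?thesis .
qed

lemma cond_mutual_info_nonneg:
  assumes dp: "is_dist p"
  shows "0 \<le> cond_mutual_info p f g h"
proof -
  define r where "r = (\<lambda>w. prob p (\<lambda>w. (f w, h w)) (f w, h w) * prob p (\<lambda>w. (g w, h w)) (g w, h w)
      / (prob p (\<lambda>w. (f w, g w, h w)) (f w, g w, h w) * prob p h (h w)))"
  have pos: "0 < prob p (\<lambda>w. (f w, h w)) (f w, h w)" "0 < prob p (\<lambda>w. (g w, h w)) (g w, h w)"
    "0 < prob p (\<lambda>w. (f w, g w, h w)) (f w, g w, h w)" "0 < prob p h (h w)" if "w \<in> supp p" for w
    using prob_pos[OF dp that] by auto
  have "cond_mutual_info p f g h = (\<Sum>w\<in>supp p. p w * - log 2 (r w))"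
    unfolding cond_mutual_info_def cond_entropy_def entropy_eq_sum_supp[OF is_dist_finite_supp[OF dp]]
      sum_negf[symmetric] diff_conv_add_uminus minus_minus sum.distrib[symmetric]
    using pos by (intro sum.cong refl) (simp add: r_def log_mult_pos log_divide_pos algebra_simps)
  also have "0 \<le> \<dots>"
  proof (rule gibbs_inequality)
    show "finite (supp p)" "sum p (supp p) = 1" using dp unfolding is_dist_def by auto
    show "(\<Sum>w\<in>supp p. p w * r w) \<le> 1"
      unfolding r_def by (rule expected_cond_product_ratio_le_1[OF dp])
  qed (use pos is_dist_nonneg[OF dp] in \<open>auto simp: r_def\<close>)
  finally show ?thesis .
qed

lemma cond_entropy_cong:
  assumes dp: "is_dist p"
    and "\<And>w w'. w \<in> supp p \<Longrightarrow> w' \<in> supp p \<Longrightarrow> f w = f w' \<longleftrightarrow> f' w = f' w'"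
    and "\<And>w w'. w \<in> supp p \<Longrightarrow> w' \<in> supp p \<Longrightarrow> g w = g w' \<longleftrightarrow> g' w = g' w'"
  shows "cond_entropy p f g = cond_entropy p f' g'"
proof -
  have "entropy p (\<lambda>w. (f w, g w)) = entropy p (\<lambda>w. (f' w, g' w))"
    by (rule entropy_cong[OF dp]) (use assms in auto)
  moreover have "entropy p g = entropy p g'"
    by (rule entropy_cong[OF dp]) (use assms in auto)
  ultimately show ?thesis unfolding cond_entropy_def by simp
qed

lemma mutual_info_cong:
  assumes dp: "is_dist p"
    and "\<And>w w'. w \<in> supp p \<Longrightarrow> w' \<in> supp p \<Longrightarrow> f w = f w' \<longleftrightarrow> f' w = f' w'"
    and "\<And>w w'. w \<in> supp p \<Longrightarrow> w' \<in> supp p \<Longrightarrow> g w = g w' \<longleftrightarrow> g' w = g' w'"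
  shows "mutual_info p f g = mutual_info p f' g'"
  unfolding mutual_info_def
  using entropy_cong[OF dp assms(2)] cond_entropy_cong[OF assms] by simp

lemma cond_mutual_info_cong:
  assumes dp: "is_dist p"
    and "\<And>w w'. w \<in> supp p \<Longrightarrow> w' \<in> supp p \<Longrightarrow> f w = f w' \<longleftrightarrow> f' w = f' w'"
    and "\<And>w w'. w \<in> supp p \<Longrightarrow> w' \<in> supp p \<Longrightarrow> g w = g w' \<longleftrightarrow> g' w = g' w'"
    and "\<And>w w'. w \<in> supp p \<Longrightarrow> w' \<in> supp p \<Longrightarrow> h w = h w' \<longleftrightarrow> h' w = h' w'"
  shows "cond_mutual_info p f g h = cond_mutual_info p f' g' h'"
proof -
  have "cond_entropy p f h = cond_entropy p f' h'"
    by (rule cond_entropy_cong[OF dp]) (use assms in auto)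
  moreover have "cond_entropy p f (\<lambda>w. (g w, h w)) = cond_entropy p f' (\<lambda>w. (g' w, h' w))"
    by (rule cond_entropy_cong[OF dp]) (use assms in auto)
  ultimately show ?thesis unfolding cond_mutual_info_def by simp
qed

lemma mutual_info_nonneg:
  assumes dp: "is_dist p"
  shows "0 \<le> mutual_info p f g"
proof -
  have "entropy p (\<lambda>w. (f w, ())) = entropy p f"
    "entropy p (\<lambda>w. (f w, g w, ())) = entropy p (\<lambda>w. (f w, g w))"
    "entropy p (\<lambda>w. (g w, ())) = entropy p g"
    by (rule entropy_cong[OF dp]; simp)+
  then have "mutual_info p f g = cond_mutual_info p f g (\<lambda>_. ())"
    unfolding mutual_info_def cond_mutual_info_def cond_entropy_def
    by (simp add: entropy_const[OF dp])
  then show ?thesis using cond_mutual_info_nonneg[OF dp] by simp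
qed

lemma mutual_info_pair_eq:
  "mutual_info p f (\<lambda>w. (h w, g w)) = mutual_info p f g + cond_mutual_info p f h g"
  unfolding mutual_info_def cond_mutual_info_def cond_entropy_def by simp

lemma mutual_info_le_pair: "is_dist p \<Longrightarrow> mutual_info p f g \<le> mutual_info p f (\<lambda>w. (h w, g w))"
  unfolding mutual_info_pair_eq using cond_mutual_info_nonneg by simp

lemma mutual_info_chain:
  assumes dp: "is_dist p"
  shows "mutual_info p u y + mutual_info p v (\<lambda>w. (u w, y w)) =
    entropy p u + entropy p v - cond_entropy p (\<lambda>w. (u w, v w)) y"
proof -
  have "entropy p (\<lambda>w. (v w, u w, y w)) = entropy p (\<lambda>w. ((u w, v w), y w))"
    by (rule entropy_cong[OF dp]) auto
  then show ?thesis unfolding mutual_info_def cond_entropy_def by simp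
qed

lemma cond_mutual_info_eq_if_prob_eq:
  assumes dp: "is_dist p" and dq: "is_dist q" and eq: "prob p G = prob q G"
  shows "cond_mutual_info p (\<lambda>w. a (G w)) (\<lambda>w. b (G w)) (\<lambda>w. c (G w)) =
         cond_mutual_info q (\<lambda>w. a (G w)) (\<lambda>w. b (G w)) (\<lambda>w. c (G w))"
proof -
  have e: "entropy p (\<lambda>w. \<phi> (G w)) = entropy q (\<lambda>w. \<phi> (G w))" for \<phi> :: "_ \<Rightarrow> 'z"
    by (rule entropy_eq_if_prob_eq[OF dp dq prob_comp_eq[OF dp dq eq]])
  show ?thesis
    using e[of "\<lambda>v. (a v, c v)"] e[of c] e[of "\<lambda>v. (a v, b v, c v)"] e[of "\<lambda>v. (b v, c v)"]
    unfolding cond_mutual_info_def cond_entropy_def by simp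
qed

lemma markov_entropy:
  assumes dp: "is_dist p" and mk: "markov p f g h"
  shows "entropy p (\<lambda>w. (f w, g w, h w)) + entropy p g =
         entropy p (\<lambda>w. (f w, g w)) + entropy p (\<lambda>w. (g w, h w))"
proof -
  have "log 2 (prob p (\<lambda>w. (f w, g w, h w)) (f w, g w, h w)) + log 2 (prob p g (g w)) =
      log 2 (prob p (\<lambda>w. (f w, g w)) (f w, g w)) + log 2 (prob p (\<lambda>w. (g w, h w)) (g w, h w))"
    if w: "w \<in> supp p" for w
  proof -
    have pos: "0 < prob p (\<lambda>w. (f w, g w, h w)) (f w, g w, h w)" "0 < prob p g (g w)"
      "0 < prob p (\<lambda>w. (f w, g w)) (f w, g w)" "0 < prob p (\<lambda>w. (g w, h w)) (g w, h w)"
      using prob_pos[OF dp w] by auto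
    have "prob p (\<lambda>w. (f w, g w, h w)) (f w, g w, h w) * prob p g (g w) =
        prob p (\<lambda>w. (f w, g w)) (f w, g w) * prob p (\<lambda>w. (g w, h w)) (g w, h w)"
      using mk unfolding markov_def by blast
    then show ?thesis using pos by (simp add: log_mult_pos[symmetric])
  qed
  then have "(\<Sum>w\<in>supp p. p w * log 2 (prob p (\<lambda>w. (f w, g w, h w)) (f w, g w, h w)))
      + (\<Sum>w\<in>supp p. p w * log 2 (prob p g (g w)))
    = (\<Sum>w\<in>supp p. p w * log 2 (prob p (\<lambda>w. (f w, g w)) (f w, g w)))
      + (\<Sum>w\<in>supp p. p w * log 2 (prob p (\<lambda>w. (g w, h w)) (g w, h w)))"
    by (simp add: sum.distrib[symmetric] distrib_left[symmetric] cong: sum.cong)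
  then show ?thesis
    unfolding entropy_eq_sum_supp[OF is_dist_finite_supp[OF dp]] by linarith
qed

lemma prob_pair_comp:
  assumes "finite (supp p)"
  shows "prob p (\<lambda>w. (\<phi> (f w), k w)) (a, t) =
    (\<Sum>x\<in>{x\<in>f ` supp p. \<phi> x = a}. prob p (\<lambda>w. (f w, k w)) (x, t))"
proof -
  have "prob p (\<lambda>w. (\<phi> (f w), k w)) (a, t) = sum p {w\<in>supp p. \<phi> (f w) = a \<and> k w = t}"
    unfolding prob_def by simp
  also have "\<dots> = (\<Sum>x\<in>{x\<in>f ` supp p. \<phi> x = a}.
      sum p {w\<in>{w\<in>supp p. \<phi> (f w) = a \<and> k w = t}. f w = x})"
    by (rule sum.group[symmetric]) (use assms in auto)
  also have "\<dots> = (\<Sum>x\<in>{x\<in>f ` supp p. \<phi> x = a}. prob p (\<lambda>w. (f w, k w)) (x, t))"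
    unfolding prob_def by (intro sum.cong refl arg_cong[where f = "sum p"]) auto
  finally show ?thesis .
qed

lemma markov_comp_left:
  assumes dp: "is_dist p" and mk: "markov p f g h"
  shows "markov p (\<lambda>w. \<phi> (f w)) g h"
  unfolding markov_def
proof (intro allI)
  fix a b c
  have fin: "finite (supp p)" using is_dist_finite_supp[OF dp] .
  let ?A = "{x\<in>f ` supp p. \<phi> x = a}"
  have "prob p (\<lambda>w. (\<phi> (f w), g w, h w)) (a, b, c) * prob p g b =
      (\<Sum>x\<in>?A. prob p (\<lambda>w. (f w, g w, h w)) (x, b, c) * prob p g b)"
    unfolding prob_pair_comp[OF fin, of \<phi> f "\<lambda>w. (g w, h w)"] sum_distrib_right ..
  also have "\<dots> = (\<Sum>x\<in>?A. prob p (\<lambda>w. (f w, g w)) (x, b) * prob p (\<lambda>w. (g w, h w)) (b, c))"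
    using mk unfolding markov_def by simp
  also have "\<dots> = prob p (\<lambda>w. (\<phi> (f w), g w)) (a, b) * prob p (\<lambda>w. (g w, h w)) (b, c)"
    unfolding prob_pair_comp[OF fin, of \<phi> f g] sum_distrib_right ..
  finally show "prob p (\<lambda>w. (\<phi> (f w), g w, h w)) (a, b, c) * prob p g b =
      prob p (\<lambda>w. (\<phi> (f w), g w)) (a, b) * prob p (\<lambda>w. (g w, h w)) (b, c)" .
qed

lemma markov_sym:
  assumes "markov p f g h"
  shows "markov p h g f"
  unfolding markov_def
proof (intro allI)
  fix c b a
  have "prob p (\<lambda>w. (h w, g w, f w)) (c, b, a) = prob p (\<lambda>w. (f w, g w, h w)) (a, b, c)"
    "prob p (\<lambda>w. (h w, g w)) (c, b) = prob p (\<lambda>w. (g w, h w)) (b, c)"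
    "prob p (\<lambda>w. (g w, f w)) (b, a) = prob p (\<lambda>w. (f w, g w)) (a, b)"
    by (rule prob_cong; auto)+
  then show "prob p (\<lambda>w. (h w, g w, f w)) (c, b, a) * prob p g b =
      prob p (\<lambda>w. (h w, g w)) (c, b) * prob p (\<lambda>w. (g w, f w)) (b, a)"
    using assms unfolding markov_def by (simp add: mult.commute)
qed

lemma markov_comp:
  assumes "is_dist p" "markov p f g h"
  shows "markov p (\<lambda>w. \<phi> (f w)) g (\<lambda>w. \<psi> (h w))"
  using markov_sym[OF markov_comp_left[OF assms(1) markov_sym[OF markov_comp_left[OF assms]]]] .

lemma markov_prob_eq:
  assumes dp: "is_dist p" and dq: "is_dist q"
    and mkp: "markov p f g h" and mkq: "markov q f g h"
    and fg: "prob p (\<lambda>w. (f w, g w)) = prob q (\<lambda>w. (f w, g w))"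
    and gh: "prob p (\<lambda>w. (g w, h w)) = prob q (\<lambda>w. (g w, h w))"
  shows "prob p (\<lambda>w. (f w, g w, h w)) = prob q (\<lambda>w. (f w, g w, h w))"
proof -
  have g: "prob p g = prob q g"
    using prob_comp_eq[OF dp dq gh, of fst] by simp
  have "prob p (\<lambda>w. (f w, g w, h w)) (a, b, c) = prob q (\<lambda>w. (f w, g w, h w)) (a, b, c)" for a b c
  proof (cases "prob p g b = 0")
    case True
    moreover have "prob q g b = 0" using True g by simp
    ultimately have "prob p (\<lambda>w. (f w, g w, h w)) (a, b, c) = 0" "prob q (\<lambda>w. (f w, g w, h w)) (a, b, c) = 0"
      using prob_triple_nonzero_mid[OF dp, of f g h a b c] prob_triple_nonzero_mid[OF dq, of f g h a b c]
      by blast+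
    then show ?thesis by simp
  next
    case False
    have "prob p (\<lambda>w. (f w, g w, h w)) (a, b, c) * prob p g b =
        prob p (\<lambda>w. (f w, g w)) (a, b) * prob p (\<lambda>w. (g w, h w)) (b, c)"
      using mkp unfolding markov_def by blast
    also have "\<dots> = prob q (\<lambda>w. (f w, g w, h w)) (a, b, c) * prob p g b"
      using mkq unfolding markov_def by (simp add: fg gh g)
    finally show ?thesis using False by simp
  qed
  then show ?thesis by (simp add: fun_eq_iff)
qed

lemma markov_mutual_info_eq:
  assumes dp: "is_dist p" and mk: "markov p f g h"
  shows "mutual_info p (\<lambda>w. (g w, f w)) h = mutual_info p g h"
proof -
  have "entropy p (\<lambda>w. (g w, f w)) = entropy p (\<lambda>w. (f w, g w))"
    "entropy p (\<lambda>w. ((g w, f w), h w)) = entropy p (\<lambda>w. (f w, g w, h w))"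
    by (rule entropy_cong[OF dp]; auto)+
  then show ?thesis
    using markov_entropy[OF dp mk] unfolding mutual_info_def cond_entropy_def by simp
qed

lemma markov_mutual_info_diff:
  assumes dp: "is_dist p"
    and mk: "markov p (\<lambda>w. (v w, u w)) x y" and mk\<^sub>v: "markov p v x y"
  shows "mutual_info p (\<lambda>w. (x w, v w)) u - mutual_info p u (\<lambda>w. (v w, y w)) =
    cond_mutual_info p x u (\<lambda>w. (v w, y w))"
proof -
  have "entropy p (\<lambda>w. ((v w, u w), x w, y w)) = entropy p (\<lambda>w. (x w, u w, v w, y w))"
    "entropy p (\<lambda>w. (v w, x w, y w)) = entropy p (\<lambda>w. (x w, v w, y w))"
    "entropy p (\<lambda>w. ((v w, u w), x w)) = entropy p (\<lambda>w. ((x w, v w), u w))"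
    "entropy p (\<lambda>w. (v w, x w)) = entropy p (\<lambda>w. (x w, v w))"
    by (rule entropy_cong[OF dp]; auto)+
  then show ?thesis
    using markov_entropy[OF dp mk] markov_entropy[OF dp mk\<^sub>v]
    unfolding mutual_info_def cond_mutual_info_def cond_entropy_def by simp
qed

section \<open>A conditionally independent coupling\<close>

lemma uc_simps:
  "uc 0 w = fst (fst w)" "uc (Suc 0) w = fst (snd (fst w))" "uc 2 w = snd (snd (fst w))"
  by (simp_all add: uc_def split: prod.splits)

lemma usub_eq_iff: "usub J w = usub J w' \<longleftrightarrow> (\<forall>j\<in>J. uc j w = uc j w')"
  unfolding usub_def by (auto simp: fun_eq_iff)

lemma markov_aux_src_side:
  assumes dr: "is_dist r" and mk: "markov r fst xc (\<lambda>w. (y1c w, y2c w))"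
    and f: "\<And>w w'. fst w = fst w' \<Longrightarrow> f w = f w'"
  shows "markov r f xc y1c" "markov r f xc y2c"
proof -
  have eq: "(\<lambda>w. f (fst w, undefined)) = f" by (intro ext f) simp
  show "markov r f xc y1c" "markov r f xc y2c"
    using markov_comp[OF dr mk, of "\<lambda>u. f (u, undefined)" fst]
      markov_comp[OF dr mk, of "\<lambda>u. f (u, undefined)" snd]
    by (simp_all only: eq fst_conv snd_conv)
qed

locale ci_coupling =
  fixes p :: "(nat \<times> nat \<times> nat) \<times> 'x::finite \<times> 'y1::finite \<times> 'y2::finite \<Rightarrow> real"
  assumes dist_p: "is_dist p"
begin

definition "Q0 = prob p (\<lambda>w. (uc 0 w, xc w))"
definition "Q1 = prob p (\<lambda>w. (uc 0 w, uc 1 w, xc w))"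
definition "Q2 = prob p (\<lambda>w. (uc 0 w, uc 2 w, xc w))"
definition "PX = prob p xc"
definition "PS = prob p snd"
definition "A0 = uc 0 ` supp p"
definition "A1 = uc 1 ` supp p"
definition "A2 = uc 2 ` supp p"

text \<open>\<open>K\<close> is the law of \<open>((U\<^sub>1\<^sub>2, U\<^sub>1, U\<^sub>2), X)\<close> in which \<open>U\<^sub>1\<close> and \<open>U\<^sub>2\<close> are conditionally
  independent given \<open>(U\<^sub>1\<^sub>2, X)\<close>, with the conditional laws of \<open>p\<close>; \<open>q\<close> attaches \<open>(Y\<^sub>1, Y\<^sub>2)\<close>
  to \<open>X\<close> through the channel of \<open>p\<close>.\<close>

definition "K = (\<lambda>((a, b, c), x). Q1 (a, b, x) * Q2 (a, c, x) / Q0 (a, x))"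
definition "q = (\<lambda>w. K (fst w, xc w) * PS (snd w) / PX (xc w))"

lemma finite_A: "finite A0" "finite A1" "finite A2"
  using is_dist_finite_supp[OF dist_p] unfolding A0_def A1_def A2_def by auto

lemma sum_Q1: "(\<Sum>b\<in>A1. Q1 (a, b, x)) = Q0 (a, x)"
proof -
  have "\<And>b. Q1 (a, b, x) = prob p (\<lambda>w. ((uc 0 w, xc w), uc 1 w)) ((a, x), b)"
    unfolding Q1_def by (rule prob_cong) auto
  then show ?thesis
    unfolding Q0_def using is_dist_finite_supp[OF dist_p] finite_A
    by (simp add: sum_prob_pair_snd A1_def)
qed

lemma sum_Q2: "(\<Sum>c\<in>A2. Q2 (a, c, x)) = Q0 (a, x)"
proof -
  have "\<And>c. Q2 (a, c, x) = prob p (\<lambda>w. ((uc 0 w, xc w), uc 2 w)) ((a, x), c)"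
    unfolding Q2_def by (rule prob_cong) auto
  then show ?thesis
    unfolding Q0_def using is_dist_finite_supp[OF dist_p] finite_A
    by (simp add: sum_prob_pair_snd A2_def)
qed

lemma sum_Q0: "(\<Sum>a\<in>A0. Q0 (a, x)) = PX x"
  unfolding Q0_def PX_def A0_def using is_dist_finite_supp[OF dist_p] by (simp add: sum_prob_pair_fst)

lemma sum_PS: "(\<Sum>y\<in>UNIV. PS (x, y)) = PX x"
proof -
  have "\<And>y. PS (x, y) = prob p (\<lambda>w. (xc w, snd (snd w))) (x, y)"
    unfolding PS_def by (rule prob_cong) (auto simp: xc_def)
  then show ?thesis
    unfolding PX_def using is_dist_finite_supp[OF dist_p] by (simp add: sum_prob_pair_snd)
qed

lemma sum_PX: "(\<Sum>x\<in>UNIV. PX x) = 1"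
proof -
  have "(\<Sum>x\<in>UNIV. PX x) = (\<Sum>x\<in>xc ` supp p. PX x)"
    by (rule sum.mono_neutral_right) (auto simp: PX_def prob_eq_0_outside)
  also have "\<dots> = 1" unfolding PX_def by (rule sum_prob_eq_1[OF dist_p])
  finally show ?thesis .
qed

lemma Q1_nonzero: "Q1 (a, b, x) \<noteq> 0 \<Longrightarrow> Q0 (a, x) \<noteq> 0 \<and> a \<in> A0 \<and> b \<in> A1"
  unfolding Q0_def Q1_def A0_def A1_def prob_eq_0_iff[OF dist_p] by force

lemma Q2_nonzero: "Q2 (a, c, x) \<noteq> 0 \<Longrightarrow> Q0 (a, x) \<noteq> 0 \<and> a \<in> A0 \<and> c \<in> A2"
  unfolding Q0_def Q2_def A0_def A2_def prob_eq_0_iff[OF dist_p] by force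

lemma Q0_nonzero: "Q0 (a, x) \<noteq> 0 \<Longrightarrow> PX x \<noteq> 0"
  unfolding Q0_def PX_def prob_eq_0_iff[OF dist_p] by force

lemma PS_nonzero: "PS (x, y) \<noteq> 0 \<Longrightarrow> PX x \<noteq> 0"
  unfolding PS_def PX_def prob_eq_0_iff[OF dist_p] by (force simp: xc_def)

lemma K_nonneg: "0 \<le> K v"
  unfolding K_def Q0_def Q1_def Q2_def
  by (auto split: prod.splits intro!: divide_nonneg_nonneg mult_nonneg_nonneg prob_nonneg[OF dist_p])

lemma K_nonzero: "K ((a, b, c), x) \<noteq> 0 \<Longrightarrow> PX x \<noteq> 0 \<and> (a, b, c) \<in> A0 \<times> A1 \<times> A2"
  using Q1_nonzero[of a b x] Q2_nonzero[of a c x] Q0_nonzero[of a x] unfolding K_def by auto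

lemma sum_K_c: "(\<Sum>c\<in>A2. K ((a, b, c), x)) = Q1 (a, b, x)"
  using Q1_nonzero[of a b x] sum_Q2[of a x]
  by (cases "Q0 (a, x) = 0") (auto simp: K_def sum_distrib_left[symmetric] sum_divide_distrib[symmetric])

lemma sum_K_b: "(\<Sum>b\<in>A1. K ((a, b, c), x)) = Q2 (a, c, x)"
  using Q2_nonzero[of a c x] sum_Q1[of a x]
  by (cases "Q0 (a, x) = 0") (auto simp: K_def sum_distrib_right[symmetric] sum_divide_distrib[symmetric])

lemma sum_K: "(\<Sum>u\<in>A0 \<times> A1 \<times> A2. K (u, x)) = PX x"
proof -
  have "(\<Sum>u\<in>A0 \<times> A1 \<times> A2. K (u, x)) = (\<Sum>a\<in>A0. \<Sum>b\<in>A1. \<Sum>c\<in>A2. K ((a, b, c), x))"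
    by (simp add: sum.cartesian_product)
  then show ?thesis by (simp add: sum_K_c sum_Q1 sum_Q0)
qed

lemma supp_q: "supp q \<subseteq> (A0 \<times> A1 \<times> A2) \<times> UNIV"
proof
  fix w assume "w \<in> supp q"
  then have "K (fst w, xc w) \<noteq> 0" unfolding supp_def q_def by auto
  then show "w \<in> (A0 \<times> A1 \<times> A2) \<times> UNIV" using K_nonzero by (cases w) auto
qed

lemma finite_supp_q: "finite (supp q)"
  using supp_q finite_A by (meson finite_SigmaI finite_UNIV finite_subset)

lemma prob_q_aux_src: "prob q (\<lambda>w. (fst w, xc w)) (u, x) = K (u, x)"
proof -
  have inj: "inj (\<lambda>w :: (nat \<times> nat \<times> nat) \<times> 'x \<times> 'y1 \<times> 'y2. ((fst w, xc w), snd (snd w)))"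
    by (auto intro!: injI simp: xc_def prod_eq_iff)
  have "prob q (\<lambda>w. (fst w, xc w)) (u, x) =
      (\<Sum>y\<in>UNIV. prob q (\<lambda>w. ((fst w, xc w), snd (snd w))) ((u, x), y))"
    by (rule sum_prob_pair_snd[OF finite_supp_q, symmetric]) simp_all
  also have "\<dots> = (\<Sum>y\<in>UNIV. q (u, x, y))"
  proof (intro sum.cong refl)
    fix y
    show "prob q (\<lambda>w. ((fst w, xc w), snd (snd w))) ((u, x), y) = q (u, x, y)"
      using prob_inj[OF inj, of q "(u, x, y)"] by (simp add: xc_def)
  qed
  also have "\<dots> = K (u, x) * (\<Sum>y\<in>UNIV. PS (x, y)) / PX x"
    by (simp add: q_def xc_def sum_distrib_left sum_divide_distrib)
  also have "\<dots> = K (u, x)"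
    using K_nonzero[of "fst u" "fst (snd u)" "snd (snd u)" x] by (cases "K (u, x) = 0") (auto simp: sum_PS)
  finally show ?thesis .
qed

lemma dist_q: "is_dist q"
proof -
  have "(\<Sum>w\<in>supp q. q w) = (\<Sum>v\<in>(\<lambda>w. (fst w, xc w)) ` supp q. prob q (\<lambda>w. (fst w, xc w)) v)"
    using sum_supp_eq_sum_prob[OF finite_supp_q, of "\<lambda>_. 1"] by simp
  also have "\<dots> = (\<Sum>v\<in>(A0 \<times> A1 \<times> A2) \<times> UNIV. prob q (\<lambda>w. (fst w, xc w)) v)"
    by (rule sum.mono_neutral_left) (use finite_A supp_q prob_eq_0_outside in \<open>auto simp: xc_def\<close>)
  also have "\<dots> = (\<Sum>u\<in>A0 \<times> A1 \<times> A2. \<Sum>x\<in>UNIV. K (u, x))"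
    by (simp add: sum.cartesian_product) (intro sum.cong refl, auto simp: prob_q_aux_src)
  also have "\<dots> = 1" by (subst sum.swap) (simp add: sum_K sum_PX)
  finally show ?thesis
    unfolding is_dist_def using finite_supp_q K_nonneg
    by (auto simp: q_def PS_def PX_def intro!: divide_nonneg_nonneg mult_nonneg_nonneg prob_nonneg[OF dist_p])
qed

lemma fst_supp_q: "fst ` supp q \<subseteq> A0 \<times> A1 \<times> A2"
  using supp_q by auto

lemma prob_q_src: "prob q xc = PX"
proof
  fix x
  have "(\<Sum>u\<in>A0 \<times> A1 \<times> A2. prob q (\<lambda>w. (fst w, xc w)) (u, x)) = prob q xc x"
    by (rule sum_prob_pair_fst[OF finite_supp_q _ fst_supp_q]) (simp add: finite_A)
  then show "prob q xc x = PX x" by (simp add: prob_q_aux_src sum_K)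
qed

lemma prob_q_snd: "prob q snd = PS"
proof
  fix s :: "'x \<times> 'y1 \<times> 'y2"
  obtain x y where s: "s = (x, y)" by (cases s)
  have "(\<Sum>u\<in>A0 \<times> A1 \<times> A2. prob q (\<lambda>w. (fst w, snd w)) (u, s)) = prob q snd s"
    by (rule sum_prob_pair_fst[OF finite_supp_q _ fst_supp_q]) (simp add: finite_A)
  moreover have "prob q (\<lambda>w. (fst w, snd w)) (u, s) = q (u, s)" for u
    using prob_inj[of "\<lambda>w. (fst w, snd w)" q "(u, s)"] by (simp add: inj_on_def)
  ultimately have "prob q snd s = (\<Sum>u\<in>A0 \<times> A1 \<times> A2. K (u, x)) * PS (x, y) / PX x"
    by (simp add: q_def s xc_def sum_distrib_right sum_divide_distrib)
  also have "\<dots> = PS s"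
    unfolding sum_K s using PS_nonzero[of x y] by (cases "PS (x, y) = 0") auto
  finally show "prob q snd s = PS s" .
qed

lemma markov_q: "markov q fst xc (\<lambda>w. (y1c w, y2c w))"
  unfolding markov_def
proof (intro allI)
  fix u x y
  have inj: "inj (\<lambda>w :: (nat \<times> nat \<times> nat) \<times> 'x \<times> 'y1 \<times> 'y2. (fst w, xc w, y1c w, y2c w))"
    by (auto intro!: injI simp: xc_def y1c_def y2c_def prod_eq_iff)
  have "prob q (\<lambda>w. (fst w, xc w, y1c w, y2c w)) (u, x, y) = q (u, x, y)"
    using prob_inj[OF inj, of q "(u, x, y)"] by (simp add: xc_def y1c_def y2c_def)
  moreover have "prob q (\<lambda>w. (xc w, y1c w, y2c w)) (x, y) = PS (x, y)"
    unfolding prob_q_snd[symmetric] by (rule prob_cong) (auto simp: xc_def y1c_def y2c_def)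
  moreover have "q (u, x, y) * PX x = K (u, x) * PS (x, y)"
    using K_nonzero[of "fst u" "fst (snd u)" "snd (snd u)" x]
    by (cases "K (u, x) = 0") (auto simp: q_def xc_def)
  ultimately show "prob q (\<lambda>w. (fst w, xc w, y1c w, y2c w)) (u, x, y) * prob q xc x =
      prob q (\<lambda>w. (fst w, xc w)) (u, x) * prob q (\<lambda>w. (xc w, y1c w, y2c w)) (x, y)"
    by (simp add: prob_q_src prob_q_aux_src)
qed

lemma aux_src_supp_q: "uc 1 ` supp q \<subseteq> A1" "uc 2 ` supp q \<subseteq> A2"
  using supp_q by (auto simp: uc_simps)

lemma prob_q_Q1: "prob q (\<lambda>w. (uc 0 w, uc 1 w, xc w)) = Q1"
proof
  fix v :: "nat \<times> nat \<times> 'x"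
  obtain a b x where v: "v = (a, b, x)" by (cases v)
  have "(\<Sum>c\<in>A2. prob q (\<lambda>w. ((uc 0 w, uc 1 w, xc w), uc 2 w)) ((a, b, x), c)) =
      prob q (\<lambda>w. (uc 0 w, uc 1 w, xc w)) (a, b, x)"
    by (rule sum_prob_pair_snd[OF finite_supp_q finite_A(3) aux_src_supp_q(2)])
  moreover have "prob q (\<lambda>w. ((uc 0 w, uc 1 w, xc w), uc 2 w)) ((a, b, x), c) = K ((a, b, c), x)" for c
    unfolding prob_q_aux_src[symmetric] by (rule prob_cong) (auto simp: uc_simps xc_def prod_eq_iff)
  ultimately show "prob q (\<lambda>w. (uc 0 w, uc 1 w, xc w)) v = Q1 v" using sum_K_c v by simp
qed

lemma prob_q_Q2: "prob q (\<lambda>w. (uc 0 w, uc 2 w, xc w)) = Q2"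
proof
  fix v :: "nat \<times> nat \<times> 'x"
  obtain a c x where v: "v = (a, c, x)" by (cases v)
  have "(\<Sum>b\<in>A1. prob q (\<lambda>w. ((uc 0 w, uc 2 w, xc w), uc 1 w)) ((a, c, x), b)) =
      prob q (\<lambda>w. (uc 0 w, uc 2 w, xc w)) (a, c, x)"
    by (rule sum_prob_pair_snd[OF finite_supp_q finite_A(2) aux_src_supp_q(1)])
  moreover have "prob q (\<lambda>w. ((uc 0 w, uc 2 w, xc w), uc 1 w)) ((a, c, x), b) = K ((a, b, c), x)" for b
    unfolding prob_q_aux_src[symmetric] by (rule prob_cong) (auto simp: uc_simps xc_def prod_eq_iff)
  ultimately show "prob q (\<lambda>w. (uc 0 w, uc 2 w, xc w)) v = Q2 v" using sum_K_b v by simp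
qed

lemma prob_q_Q0: "prob q (\<lambda>w. (uc 0 w, xc w)) (a, x) = Q0 (a, x)"
proof -
  have "(\<Sum>b\<in>A1. prob q (\<lambda>w. ((uc 0 w, xc w), uc 1 w)) ((a, x), b)) = prob q (\<lambda>w. (uc 0 w, xc w)) (a, x)"
    by (rule sum_prob_pair_snd[OF finite_supp_q finite_A(2) aux_src_supp_q(1)])
  moreover have "prob q (\<lambda>w. ((uc 0 w, xc w), uc 1 w)) ((a, x), b) = Q1 (a, b, x)" for b
    unfolding prob_q_Q1[symmetric] by (rule prob_cong) auto
  ultimately show ?thesis using sum_Q1 by simp
qed

lemma markov_q_aux: "markov q (uc 1) (\<lambda>w. (uc 0 w, xc w)) (uc 2)"
  unfolding markov_def
proof (intro allI)
  fix b c :: nat and v :: "nat \<times> 'x"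
  obtain a x where v: "v = (a, x)" by (cases v)
  have "prob q (\<lambda>w. (uc 1 w, (uc 0 w, xc w), uc 2 w)) (b, v, c) = K ((a, b, c), x)"
    unfolding prob_q_aux_src[symmetric] v by (rule prob_cong) (auto simp: uc_simps xc_def prod_eq_iff)
  moreover have "prob q (\<lambda>w. (uc 1 w, (uc 0 w, xc w))) (b, v) = Q1 (a, b, x)"
    unfolding prob_q_Q1[symmetric] v by (rule prob_cong) auto
  moreover have "prob q (\<lambda>w. ((uc 0 w, xc w), uc 2 w)) (v, c) = Q2 (a, c, x)"
    unfolding prob_q_Q2[symmetric] v by (rule prob_cong) auto
  moreover have "K ((a, b, c), x) * Q0 (a, x) = Q1 (a, b, x) * Q2 (a, c, x)"
    using Q1_nonzero[of a b x] by (cases "Q0 (a, x) = 0") (auto simp: K_def)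
  ultimately show "prob q (\<lambda>w. (uc 1 w, (uc 0 w, xc w), uc 2 w)) (b, v, c) * prob q (\<lambda>w. (uc 0 w, xc w)) v =
      prob q (\<lambda>w. (uc 1 w, (uc 0 w, xc w))) (b, v) * prob q (\<lambda>w. ((uc 0 w, xc w), uc 2 w)) (v, c)"
    using prob_q_Q0 v by simp
qed

end

lemma exists_ci_coupling:
  fixes p :: "(nat \<times> nat \<times> nat) \<times> 'x::finite \<times> 'y1::finite \<times> 'y2::finite \<Rightarrow> real"
  assumes dp: "is_dist p" and mk: "markov p fst xc (\<lambda>w. (y1c w, y2c w))"
  obtains q where "is_dist q" "prob q snd = prob p snd" "markov q fst xc (\<lambda>w. (y1c w, y2c w))"
    "markov q (uc 1) (\<lambda>w. (uc 0 w, xc w)) (uc 2)"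
    "prob q (\<lambda>w. ((uc 0 w, uc 1 w), xc w, y1c w)) = prob p (\<lambda>w. ((uc 0 w, uc 1 w), xc w, y1c w))"
    "prob q (\<lambda>w. ((uc 0 w, uc 2 w), xc w, y2c w)) = prob p (\<lambda>w. ((uc 0 w, uc 2 w), xc w, y2c w))"
proof -
  interpret ci_coupling p by (rule ci_coupling.intro[OF dp])
  have snd: "prob q snd = prob p snd" by (simp add: prob_q_snd PS_def)
  have side: "prob q (\<lambda>w. (xc w, y1c w)) = prob p (\<lambda>w. (xc w, y1c w))"
    "prob q (\<lambda>w. (xc w, y2c w)) = prob p (\<lambda>w. (xc w, y2c w))"
    using prob_comp_eq[OF dist_q dp snd, of "\<lambda>s. (fst s, fst (snd s))"]
      prob_comp_eq[OF dist_q dp snd, of "\<lambda>s. (fst s, snd (snd s))"]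
    by (simp_all add: xc_def y1c_def y2c_def)
  have "prob q (\<lambda>w. (uc 0 w, uc 1 w, xc w)) = prob p (\<lambda>w. (uc 0 w, uc 1 w, xc w))"
    "prob q (\<lambda>w. (uc 0 w, uc 2 w, xc w)) = prob p (\<lambda>w. (uc 0 w, uc 2 w, xc w))"
    by (simp_all only: prob_q_Q1 prob_q_Q2 Q1_def Q2_def)
  from this[THEN prob_comp_eq[OF dist_q dp], of "\<lambda>(a, b, x). ((a, b), x)"]
  have aux: "prob q (\<lambda>w. ((uc 0 w, uc 1 w), xc w)) = prob p (\<lambda>w. ((uc 0 w, uc 1 w), xc w))"
    "prob q (\<lambda>w. ((uc 0 w, uc 2 w), xc w)) = prob p (\<lambda>w. ((uc 0 w, uc 2 w), xc w))"
    by simp_all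
  have "markov q (\<lambda>w. (uc 0 w, uc 1 w)) xc y1c" "markov p (\<lambda>w. (uc 0 w, uc 1 w)) xc y1c"
    "markov q (\<lambda>w. (uc 0 w, uc 2 w)) xc y2c" "markov p (\<lambda>w. (uc 0 w, uc 2 w)) xc y2c"
    by (rule markov_aux_src_side[OF dist_q markov_q] markov_aux_src_side[OF dp mk]; simp add: uc_def)+
  from markov_prob_eq[OF dist_q dp this(1,2) aux(1) side(1)]
    markov_prob_eq[OF dist_q dp this(3,4) aux(2) side(2)]
  show ?thesis by (intro that[OF dist_q snd markov_q markov_q_aux]) simp_all
qed

section \<open>Decoding the common description first\<close>

text \<open>In the ordering \<open>[{1, 2}, {1}, {2}]\<close>, position 0 holds \<open>U\<^sub>1\<^sub>2\<close> and position \<open>l\<close> holds \<open>U\<^sub>l\<close>.\<close>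

definition bin_rate :: "((nat \<times> nat \<times> nat) \<times> 'x \<times> 'y1 \<times> 'y2 \<Rightarrow> real) \<Rightarrow> nat \<Rightarrow> real" where
  "bin_rate q j =
    (if j = 0 then min (mutual_info q (uc 0) y1c) (mutual_info q (uc 0) y2c)
     else if j = 1 then mutual_info q (uc 1) (\<lambda>w. (uc 0 w, y1c w))
     else mutual_info q (uc 2) (\<lambda>w. (uc 0 w, y2c w)))"

definition rate :: "((nat \<times> nat \<times> nat) \<times> 'x \<times> 'y1 \<times> 'y2 \<Rightarrow> real) \<Rightarrow> nat \<Rightarrow> real" where
  "rate q j = mutual_info q (\<lambda>w. (xc w, usub {..<j} w)) (uc j) - bin_rate q j"

lemma bin_rate_nonneg: "is_dist q \<Longrightarrow> 0 \<le> bin_rate q j"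
  unfolding bin_rate_def by (simp add: mutual_info_nonneg)

lemma rate_0:
  assumes dq: "is_dist q" and mk: "markov q fst xc (\<lambda>w. (y1c w, y2c w))"
  shows "rate q 0 = max (cond_mutual_info q xc (uc 0) y1c) (cond_mutual_info q xc (uc 0) y2c)"
proof -
  let ?v = "usub {..<0}"
  have "markov q (\<lambda>w. (?v w, uc 0 w)) xc y1c" "markov q (\<lambda>w. (?v w, uc 0 w)) xc y2c"
    "markov q ?v xc y1c" "markov q ?v xc y2c"
    by (rule markov_aux_src_side[OF dq mk]; simp add: uc_def usub_def)+
  then have "mutual_info q (\<lambda>w. (xc w, ?v w)) (uc 0) - mutual_info q (uc 0) (\<lambda>w. (?v w, y1c w)) =
      cond_mutual_info q xc (uc 0) (\<lambda>w. (?v w, y1c w))"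
    "mutual_info q (\<lambda>w. (xc w, ?v w)) (uc 0) - mutual_info q (uc 0) (\<lambda>w. (?v w, y2c w)) =
      cond_mutual_info q xc (uc 0) (\<lambda>w. (?v w, y2c w))"
    by (simp_all add: markov_mutual_info_diff[OF dq])
  moreover have "mutual_info q (uc 0) (\<lambda>w. (?v w, y1c w)) = mutual_info q (uc 0) y1c"
    "mutual_info q (uc 0) (\<lambda>w. (?v w, y2c w)) = mutual_info q (uc 0) y2c"
    "cond_mutual_info q xc (uc 0) (\<lambda>w. (?v w, y1c w)) = cond_mutual_info q xc (uc 0) y1c"
    "cond_mutual_info q xc (uc 0) (\<lambda>w. (?v w, y2c w)) = cond_mutual_info q xc (uc 0) y2c"
    by (rule mutual_info_cong[OF dq] cond_mutual_info_cong[OF dq]; simp add: usub_def)+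
  ultimately show ?thesis unfolding rate_def bin_rate_def by (simp add: max_def min_def)
qed

lemma rate_1:
  assumes dq: "is_dist q" and mk: "markov q fst xc (\<lambda>w. (y1c w, y2c w))"
  shows "rate q 1 = cond_mutual_info q xc (uc 1) (\<lambda>w. (uc 0 w, y1c w))"
proof -
  have mk1: "markov q (\<lambda>w. (uc 0 w, uc 1 w)) xc y1c" "markov q (uc 0) xc y1c"
    by (rule markov_aux_src_side[OF dq mk]; simp add: uc_def)+
  have "mutual_info q (\<lambda>w. (xc w, usub {..<1} w)) (uc 1) = mutual_info q (\<lambda>w. (xc w, uc 0 w)) (uc 1)"
    by (rule mutual_info_cong[OF dq]) (auto simp: usub_eq_iff)
  then show ?thesis
    unfolding rate_def bin_rate_def
    using markov_mutual_info_diff[OF dq mk1]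
    by simp
qed

lemma rate_2:
  assumes dq: "is_dist q" and mk: "markov q fst xc (\<lambda>w. (y1c w, y2c w))"
    and ci: "markov q (uc 1) (\<lambda>w. (uc 0 w, xc w)) (uc 2)"
  shows "rate q 2 = cond_mutual_info q xc (uc 2) (\<lambda>w. (uc 0 w, y2c w))"
proof -
  have mk2: "markov q (\<lambda>w. (uc 0 w, uc 2 w)) xc y2c" "markov q (uc 0) xc y2c"
    by (rule markov_aux_src_side[OF dq mk]; simp add: uc_def)+
  have "mutual_info q (\<lambda>w. (xc w, usub {..<2} w)) (uc 2) =
      mutual_info q (\<lambda>w. ((uc 0 w, xc w), uc 1 w)) (uc 2)"
    by (rule mutual_info_cong[OF dq]) (auto simp: usub_eq_iff less_2_cases_iff)
  also have "\<dots> = mutual_info q (\<lambda>w. (uc 0 w, xc w)) (uc 2)"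
    by (rule markov_mutual_info_eq[OF dq ci])
  also have "\<dots> = mutual_info q (\<lambda>w. (xc w, uc 0 w)) (uc 2)"
    by (rule mutual_info_cong[OF dq]) auto
  finally show ?thesis
    unfolding rate_def bin_rate_def
    using markov_mutual_info_diff[OF dq mk2]
    by simp
qed

lemma decoder_constraint:
  fixes y :: "(nat \<times> nat \<times> nat) \<times> 'x \<times> 'y1 \<times> 'y2 \<Rightarrow> 'y"
  assumes dq: "is_dist q" and l: "l \<noteq> 0"
    and bin_0: "R' 0 \<le> mutual_info q (uc 0) y"
    and bin_l: "R' l = mutual_info q (uc l) (\<lambda>w. (uc 0 w, y w))"
    and J: "J \<noteq> {}" "J \<subseteq> {0, l}"
  shows "(\<Sum>j\<in>J. R' j) \<le>
    (\<Sum>j\<in>J. entropy q (uc j)) - cond_entropy q (usub J) (\<lambda>w. (usub ({0, l} - J) w, y w))"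
proof -
  from J consider "J = {0}" | "J = {l}" | "J = {0, l}" by blast
  then show ?thesis
  proof cases
    case 1
    have "cond_entropy q (usub {0}) (\<lambda>w. (usub ({0, l} - {0}) w, y w)) =
        cond_entropy q (uc 0) (\<lambda>w. (uc l w, y w))"
      by (rule cond_entropy_cong[OF dq]) (auto simp: usub_eq_iff l)
    then show ?thesis
      using 1 bin_0 mutual_info_le_pair[OF dq, of "uc 0" y "uc l"] unfolding mutual_info_def by simp
  next
    case 2
    have "cond_entropy q (usub {l}) (\<lambda>w. (usub ({0, l} - {l}) w, y w)) =
        cond_entropy q (uc l) (\<lambda>w. (uc 0 w, y w))"
      by (rule cond_entropy_cong[OF dq]) (auto simp: usub_eq_iff l)
    then show ?thesis using 2 bin_l unfolding mutual_info_def by simp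
  next
    case 3
    have "cond_entropy q (usub {0, l}) (\<lambda>w. (usub ({0, l} - {0, l}) w, y w)) =
        cond_entropy q (\<lambda>w. (uc 0 w, uc l w)) y"
      by (rule cond_entropy_cong[OF dq]) (auto simp: usub_eq_iff)
    then show ?thesis using 3 bin_0 bin_l mutual_info_chain[OF dq, of "uc 0" y "uc l"] l by simp
  qed
qed

lemma dec_common_first: "dec [{1, 2}, {1}, {2}] 1 = {0, 1}" "dec [{1, 2}, {1}, {2}] 2 = {0, 2}"
  unfolding dec_def by (auto simp: less_Suc_eq numeral_3_eq_3)

lemma ach_feasible_rate:
  assumes dq: "is_dist q" and marg: "prob q snd = PXY"
    and mk: "markov q fst xc (\<lambda>w. (y1c w, y2c w))"
    and ci: "markov q (uc 1) (\<lambda>w. (uc 0 w, xc w)) (uc 2)"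
    and dist1: "expect q (\<lambda>w. d1 (xc w) (g1 (uc 0 w) (uc 1 w) (y1c w))) \<le> D1"
    and dist2: "expect q (\<lambda>w. d2 (xc w) (g2 (uc 0 w) (uc 2 w) (y2c w))) \<le> D2"
  shows "ach_feasible PXY d1 d2 D1 D2 [{1, 2}, {1}, {2}] q (rate q) (bin_rate q)"
  unfolding ach_feasible_def dec_common_first
proof (intro conjI allI impI)
  show "\<exists>g1' g2'.
      expect q (\<lambda>w. d1 (xc w) (g1' (usub {0, 1} w) (y1c w))) \<le> D1 \<and>
      expect q (\<lambda>w. d2 (xc w) (g2' (usub {0, 2} w) (y2c w))) \<le> D2"
    using dist1 dist2
    by (intro exI[of _ "\<lambda>u. g1 (u 0) (u 1)"] exI[of _ "\<lambda>u. g2 (u 0) (u 2)"]) (simp add: usub_def)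
  fix j :: nat assume "j < 3"
  then consider "j = 0" | "j = 1" | "j = 2" by linarith
  then show "0 \<le> rate q j"
    using rate_0[OF dq mk] rate_1[OF dq mk] rate_2[OF dq mk ci]
    by cases (auto simp: cond_mutual_info_nonneg[OF dq] le_max_iff_disj)
next
  fix J :: "nat set" assume "J \<noteq> {} \<and> J \<subseteq> {0, 1}"
  then show "(\<Sum>j\<in>J. bin_rate q j) \<le> (\<Sum>j\<in>J. entropy q (uc j))
      - cond_entropy q (usub J) (\<lambda>w. (usub ({0, 1} - J) w, y1c w))"
    by (intro decoder_constraint[OF dq]) (auto simp: bin_rate_def)
next
  fix J :: "nat set" assume "J \<noteq> {} \<and> J \<subseteq> {0, 2}"
  then show "(\<Sum>j\<in>J. bin_rate q j) \<le> (\<Sum>j\<in>J. entropy q (uc j))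
      - cond_entropy q (usub J) (\<lambda>w. (usub ({0, 2} - J) w, y2c w))"
    by (intro decoder_constraint[OF dq]) (auto simp: bin_rate_def)
qed (auto simp: dq marg mk bin_rate_nonneg rate_def)

definition RT_rate :: "((nat \<times> nat \<times> nat) \<times> 'x \<times> 'y1 \<times> 'y2 \<Rightarrow> real) \<Rightarrow> real" where
  "RT_rate p =
    max (cond_mutual_info p xc (uc 0) y1c) (cond_mutual_info p xc (uc 0) y2c)
    + cond_mutual_info p xc (uc 1) (\<lambda>w. (uc 0 w, y1c w))
    + cond_mutual_info p xc (uc 2) (\<lambda>w. (uc 0 w, y2c w))"

lemma RT_rate_eq_if_prob_eq:
  assumes dp: "is_dist p" and dq: "is_dist q"
    and eq1: "prob p (\<lambda>w. ((uc 0 w, uc 1 w), xc w, y1c w)) = prob q (\<lambda>w. ((uc 0 w, uc 1 w), xc w, y1c w))"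
    and eq2: "prob p (\<lambda>w. ((uc 0 w, uc 2 w), xc w, y2c w)) = prob q (\<lambda>w. ((uc 0 w, uc 2 w), xc w, y2c w))"
  shows "RT_rate p = RT_rate q"
  using cond_mutual_info_eq_if_prob_eq[OF dp dq eq1,
      of "\<lambda>((u0, u), x, y). x" "\<lambda>((u0, u), x, y). u0" "\<lambda>((u0, u), x, y). y"]
    cond_mutual_info_eq_if_prob_eq[OF dp dq eq2,
      of "\<lambda>((u0, u), x, y). x" "\<lambda>((u0, u), x, y). u0" "\<lambda>((u0, u), x, y). y"]
    cond_mutual_info_eq_if_prob_eq[OF dp dq eq1,
      of "\<lambda>((u0, u), x, y). x" "\<lambda>((u0, u), x, y). u" "\<lambda>((u0, u), x, y). (u0, y)"]
    cond_mutual_info_eq_if_prob_eq[OF dp dq eq2,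
      of "\<lambda>((u0, u), x, y). x" "\<lambda>((u0, u), x, y). u" "\<lambda>((u0, u), x, y). (u0, y)"]
  unfolding RT_rate_def by simp

lemma lower_convex_env_le: "lower_convex_env F D \<le> F D"
proof -
  have "F D \<in> {(\<Sum>k<(n::nat). ereal (c k) * F (Ds k)) | n c Ds.
      (\<forall>k<n. 0 \<le> c k) \<and> (\<Sum>k<n. c k) = 1 \<and>
      (\<Sum>k<n. c k * fst (Ds k)) = fst D \<and> (\<Sum>k<n. c k * snd (Ds k)) = snd D}"
    by (intro CollectI exI[of _ 1] exI[of _ "\<lambda>_. 1"] exI[of _ "\<lambda>_. D"]) simp
  then show ?thesis unfolding lower_convex_env_def by (rule Inf_lower)
qed

lemma Rach'_le_RT_rate:
  fixes p :: "(nat \<times> nat \<times> nat) \<times> 'x::finite \<times> 'y1::finite \<times> 'y2::finite \<Rightarrow> real"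
    and g1 :: "nat \<Rightarrow> nat \<Rightarrow> 'y1 \<Rightarrow> 'z1" and g2 :: "nat \<Rightarrow> nat \<Rightarrow> 'y2 \<Rightarrow> 'z2"
  assumes dp: "is_dist p" and marg: "prob p snd = PXY"
    and mk: "markov p fst xc (\<lambda>w. (y1c w, y2c w))"
    and dist1: "expect p (\<lambda>w. d1 (xc w) (g1 (uc 0 w) (uc 1 w) (y1c w))) \<le> fst D"
    and dist2: "expect p (\<lambda>w. d2 (xc w) (g2 (uc 0 w) (uc 2 w) (y2c w))) \<le> snd D"
  shows "Rach' PXY d1 d2 D \<le> ereal (RT_rate p)"
proof -
  obtain q where dq: "is_dist q" and marg_q: "prob q snd = prob p snd"
    and mk_q: "markov q fst xc (\<lambda>w. (y1c w, y2c w))"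
    and ci: "markov q (uc 1) (\<lambda>w. (uc 0 w, xc w)) (uc 2)"
    and law1: "prob q (\<lambda>w. ((uc 0 w, uc 1 w), xc w, y1c w)) = prob p (\<lambda>w. ((uc 0 w, uc 1 w), xc w, y1c w))"
    and law2: "prob q (\<lambda>w. ((uc 0 w, uc 2 w), xc w, y2c w)) = prob p (\<lambda>w. ((uc 0 w, uc 2 w), xc w, y2c w))"
    by (rule exists_ci_coupling[OF dp mk])
  have dist_q: "expect q (\<lambda>w. d1 (xc w) (g1 (uc 0 w) (uc 1 w) (y1c w))) \<le> fst D"
    "expect q (\<lambda>w. d2 (xc w) (g2 (uc 0 w) (uc 2 w) (y2c w))) \<le> snd D"
    using expect_eq_if_prob_eq[OF dq dp law1, of "\<lambda>((a, b), x, y). d1 x (g1 a b y)"]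
      expect_eq_if_prob_eq[OF dq dp law2, of "\<lambda>((a, c), x, y). d2 x (g2 a c y)"] dist1 dist2
    by simp_all
  have "ach_feasible PXY d1 d2 (fst D) (snd D) [{1, 2}, {1}, {2}] q (rate q) (bin_rate q)"
    by (rule ach_feasible_rate[OF dq _ mk_q ci dist_q]) (simp add: marg_q marg)
  then have "Rach' PXY d1 d2 D \<le> ereal (rate q 0 + rate q 1 + rate q 2)"
    unfolding Rach'_def by (intro Inf_lower) blast
  also have "rate q 0 + rate q 1 + rate q 2 = RT_rate q"
    unfolding RT_rate_def rate_0[OF dq mk_q] rate_1[OF dq mk_q] rate_2[OF dq mk_q ci] ..
  also have "\<dots> = RT_rate p"
    using RT_rate_eq_if_prob_eq[OF dq dp law1 law2] .
  finally show ?thesis .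
qed

lemma Rach'_le_RT:
  fixes PXY :: "'x::finite \<times> 'y1::finite \<times> 'y2::finite \<Rightarrow> real"
    and d1 :: "'x \<Rightarrow> 'z1 \<Rightarrow> real" and d2 :: "'x \<Rightarrow> 'z2 \<Rightarrow> real"
  shows "Rach' PXY d1 d2 D \<le> RT PXY d1 d2 D"
  unfolding RT_def RT_rate_def[symmetric]
  by (rule Inf_greatest) (auto intro: Rach'_le_RT_rate)

theorem lemma1:
  fixes PXY :: "'x::finite \<times> 'y1::finite \<times> 'y2::finite \<Rightarrow> real"
    and d1 :: "'x \<Rightarrow> 'z1::finite \<Rightarrow> real"
    and d2 :: "'x \<Rightarrow> 'z2::finite \<Rightarrow> real"
    and D :: "real \<times> real"
  assumes "is_dist PXY"
  shows "Rach PXY d1 d2 D \<le> RT PXY d1 d2 D"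
proof -
  have "Rach PXY d1 d2 D \<le> Rach' PXY d1 d2 D"
    unfolding Rach_def by (rule lower_convex_env_le)
  also have "\<dots> \<le> RT PXY d1 d2 D"
    by (rule Rach'_le_RT)
  finally show ?thesis .
qed

end
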